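(* Let $E$ be a Banach lattice with the property (d), and let $A \subset E$. Then $|A| = \{|x| : x \in A\}$ is an almost Grothendieck set if and only if the solid hull $\mathrm{sol}(A)$ is an almost Grothendieck set.
   Context: Every bounded linear operator $T: E \to c_0$ on a Banach lattice $E$ is of the form $T(x) = (x_n'(x))_n$ for a unique weak* null sequence $(x_n') \subset E'$; $T$ is a disjoint operator if $(x_n')$ is a disjoint sequence in the dual Banach lattice $E'$. A subset $A \subset E$ is almost Grothendieck if $T(A)$ is relatively weakly compact in $c_0$ for every disjoint operator $T: E \to c_0$. $E$ has the property (d) if $|x_n'| \to 0$ weak* in $E'$ for every disjoint weak* null sequence $(x_n')$ in $E'$. The solid hull is $\mathrm{sol}(A) = \{x \in E : |x| \le |y| \text{ for some } y \in A\}$. *)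

theory Defs
  imports "HOL-Analysis.Analysis"
begin

definition labs :: "'a::{lattice, uminus} \<Rightarrow> 'a" where
  "labs x = sup x (- x)"

class banach_lattice = banach + ordered_real_vector + lattice +
  assumes norm_lattice_mono: "sup x (- x) \<le> sup y (- y) \<Longrightarrow> norm x \<le> norm y"

text \<open>The modulus of f in E' is given by the
  Riesz--Kantorovich formula |f|(u) = sup { |f y| : |y| \<le> u } for u \<ge> 0, extended linearly:
  |f|(x) = |f|(x^+) - |f|(x^-).\<close>

definition dual_abs_pos :: "('a::banach_lattice \<Rightarrow> real) \<Rightarrow> 'a \<Rightarrow> real" where
  "dual_abs_pos f u = Sup {\<bar>f y\<bar> | y. labs y \<le> u}"

definition dual_abs :: "('a::banach_lattice \<Rightarrow> real) \<Rightarrow> 'a \<Rightarrow> real" where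
  "dual_abs f x = dual_abs_pos f (sup x 0) - dual_abs_pos f (sup (- x) 0)"

text \<open>Disjointness in E': |f| \<sqinter> |g| = 0, where the infimum of positive functionals h, k is
  (h \<sqinter> k)(x) = inf { h y + k (x - y) : 0 \<le> y \<le> x } for x \<ge> 0.\<close>

definition dual_disjoint :: "('a::banach_lattice \<Rightarrow> real) \<Rightarrow> ('a \<Rightarrow> real) \<Rightarrow> bool" where
  "dual_disjoint f g \<longleftrightarrow>
     (\<forall>x. 0 \<le> x \<longrightarrow> Inf {dual_abs f y + dual_abs g (x - y) | y. 0 \<le> y \<and> y \<le> x} = 0)"

definition disjoint_dual_seq :: "(nat \<Rightarrow> 'a::banach_lattice \<Rightarrow> real) \<Rightarrow> bool" where
  "disjoint_dual_seq f \<longleftrightarrow> (\<forall>n m. n \<noteq> m \<longrightarrow> dual_disjoint (f n) (f m))"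

definition weak_star_null :: "(nat \<Rightarrow> 'a::real_normed_vector \<Rightarrow> real) \<Rightarrow> bool" where
  "weak_star_null f \<longleftrightarrow> (\<forall>n. bounded_linear (f n)) \<and> (\<forall>x. (\<lambda>n. f n x) \<longlonglongrightarrow> 0)"

definition c0 :: "(nat \<Rightarrow> real) set" where
  "c0 = {s. s \<longlonglongrightarrow> 0}"

definition c0_norm :: "(nat \<Rightarrow> real) \<Rightarrow> real" where
  "c0_norm s = (SUP n. \<bar>s n\<bar>)"

definition c0_dual :: "((nat \<Rightarrow> real) \<Rightarrow> real) set" where
  "c0_dual = {\<phi>. (\<forall>s\<in>c0. \<forall>t\<in>c0. \<forall>a b. \<phi> (\<lambda>n. a * s n + b * t n) = a * \<phi> s + b * \<phi> t)
                 \<and> (\<exists>K. \<forall>s\<in>c0. \<bar>\<phi> s\<bar> \<le> K * c0_norm s)}"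

definition c0_weak :: "(nat \<Rightarrow> real) topology" where
  "c0_weak = topology_generated_by {{s \<in> c0. \<phi> s \<in> U} | \<phi> U. \<phi> \<in> c0_dual \<and> open U}"

definition rel_weakly_compact_c0 :: "(nat \<Rightarrow> real) set \<Rightarrow> bool" where
  "rel_weakly_compact_c0 S \<longleftrightarrow> S \<subseteq> c0 \<and> compactin c0_weak (c0_weak closure_of S)"

text \<open>A disjoint operator T : E \<rightarrow> c_0 is T x = (f n x)_n with (f n) a disjoint weak* null
  sequence in E'.\<close>
definition almost_grothendieck :: "'a::banach_lattice set \<Rightarrow> bool" where
  "almost_grothendieck A \<longleftrightarrow>
     (\<forall>f. weak_star_null f \<and> disjoint_dual_seq f \<longrightarrow>
          rel_weakly_compact_c0 ((\<lambda>x n. f n x) ` A))"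

definition property_d :: "'a::banach_lattice itself \<Rightarrow> bool" where
  "property_d _ \<longleftrightarrow>
     (\<forall>f :: nat \<Rightarrow> 'a \<Rightarrow> real. weak_star_null f \<and> disjoint_dual_seq f \<longrightarrow>
          (\<forall>x. (\<lambda>n. dual_abs (f n) x) \<longlonglongrightarrow> 0))"

definition sol :: "'a::banach_lattice set \<Rightarrow> 'a set" where
  "sol A = {x. \<exists>y\<in>A. labs x \<le> labs y}"

end

(*
  Let (f_n) be a disjoint weak* null sequence in E'. By property (d) the moduli (|f_n|) again
  form a disjoint weak* null sequence, and |x| <= |y| implies |f_n x| <= |f_n| |y|. Hence the
  image of sol(A) under the disjoint operator given by (f_n) is dominated coordinatewise by the
  image of |A| under the one given by (|f_n|). In c_0 a set dominated coordinatewise by a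
  relatively weakly compact set K is itself relatively weakly compact: it lies in the image of
  the compact space K x [-1,1]^N under the pointwise product, and this map is weakly
  continuous because K is bounded (by a gliding hump argument against l_1 = c_0').
  The converse direction is the inclusion of |A| in sol(A).
*)
theory Submission
  imports Defs "HOL-Library.Lattice_Algebras"
begin

section \<open>The modulus in a Banach lattice and in its dual\<close>

context banach_lattice begin
subclass lattice_ab_group_add ..
end

lemma labs_ge_self: "x \<le> labs (x::'a::banach_lattice)"
  and labs_ge_minus: "- x \<le> labs x"
  unfolding labs_def by auto

lemma labs_le_iff: "labs (x::'a::banach_lattice) \<le> u \<longleftrightarrow> x \<le> u \<and> - x \<le> u"
  unfolding labs_def by simp

lemma labs_nonneg: "0 \<le> labs (x::'a::banach_lattice)"
proof -
  have "x + - x \<le> labs x + labs x"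
    by (intro add_mono labs_ge_self labs_ge_minus)
  then show ?thesis by simp
qed

lemma labs_of_nonneg: "0 \<le> (u::'a::banach_lattice) \<Longrightarrow> labs u = u"
  unfolding labs_def by (rule sup_absorb1) (meson neg_le_0_iff_le order_trans)

lemma labs_zero [simp]: "labs (0::'a::banach_lattice) = 0"
  by (simp add: labs_def)

lemma labs_le_zero_iff: "labs (y::'a::banach_lattice) \<le> 0 \<longleftrightarrow> y = 0"
  unfolding labs_le_iff by (auto intro: antisym)

lemma labs_minus [simp]: "labs (- (x::'a::banach_lattice)) = labs x"
  unfolding labs_def by (simp add: sup_commute)

lemma labs_triangle: "labs ((x::'a::banach_lattice) + y) \<le> labs x + labs y"
  unfolding labs_le_iff minus_add_distrib
  by (intro conjI add_mono labs_ge_self labs_ge_minus)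

lemma labs_scaleR_le: "0 \<le> r \<Longrightarrow> labs (r *\<^sub>R (y::'a::banach_lattice)) \<le> r *\<^sub>R labs y"
  unfolding labs_le_iff scaleR_minus_right[symmetric]
  by (intro conjI scaleR_left_mono labs_ge_self labs_ge_minus)

lemma norm_le_if_labs_le: "labs (x::'a::banach_lattice) \<le> labs y \<Longrightarrow> norm x \<le> norm y"
  unfolding labs_def by (rule norm_lattice_mono)

lemma norm_le_if_labs_le_nonneg:
  "labs (x::'a::banach_lattice) \<le> u \<Longrightarrow> 0 \<le> u \<Longrightarrow> norm x \<le> norm u"
  using norm_le_if_labs_le labs_of_nonneg by metis

lemma pprt_minus_pprt_uminus: "pprt (x::'a::banach_lattice) - pprt (- x) = x"
  by (metis pprt_neg prts diff_minus_eq_add)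

lemma pprt_le_labs: "pprt (x::'a::banach_lattice) \<le> labs x"
  unfolding pprt_def by (simp add: labs_ge_self labs_nonneg)

lemma labs_diff_le_if_between:
  fixes a b w :: "'a::banach_lattice"
  assumes "0 \<le> a" "a \<le> w" "0 \<le> b" "b \<le> w"
  shows "labs (a - b) \<le> w"
  unfolding labs_le_iff minus_diff_eq using assms
  by (metis diff_le_eq add_increasing2 order_trans order_refl)

lemma le_add_imp_diff_inf_le:
  fixes p u v :: "'a::banach_lattice"
  assumes "p \<le> u + v" "0 \<le> v"
  shows "p - inf p u \<le> v"
proof -
  have "p \<le> inf (v + p) (v + u)"
    using assms by (simp add: add_increasing add.commute)
  then have "p \<le> v + inf p u" by (simp add: add_inf_distrib_left)
  then show ?thesis by (simp only: diff_le_eq)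
qed

lemma riesz_decomposition:
  fixes y u v :: "'a::banach_lattice"
  assumes u: "0 \<le> u" and v: "0 \<le> v" and y: "labs y \<le> u + v"
  obtains z1 z2 where "y = z1 + z2" "labs z1 \<le> u" "labs z2 \<le> v"
proof
  define p q where "p = pprt y" and "q = pprt (- y)"
  have p: "0 \<le> p" "p \<le> u + v" and q: "0 \<le> q" "q \<le> u + v"
    using pprt_le_labs[of y] pprt_le_labs[of "- y"] y by (auto simp: p_def q_def)
  have "(a - b) + ((c - a) - (d - b)) = c - d" for a b c d :: 'a
    by (simp add: algebra_simps)
  then show "y = (inf p u - inf q u) + ((p - inf p u) - (q - inf q u))"
    using pprt_minus_pprt_uminus[of y] by (simp only: p_def q_def)
  show "labs (inf p u - inf q u) \<le> u"
    using p q u by (intro labs_diff_le_if_between) auto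
  show "labs ((p - inf p u) - (q - inf q u)) \<le> v"
    using p q v le_add_imp_diff_inf_le[OF p(2) v] le_add_imp_diff_inf_le[OF q(2) v]
    by (intro labs_diff_le_if_between) (auto simp del: diff_inf_eq_sup simp: diff_ge_0_iff_ge)
qed

locale lattice_functional = bounded_linear f for f :: "'a::banach_lattice \<Rightarrow> real"
begin

lemma dual_abs_pos_bdd_above: "bdd_above {\<bar>f y\<bar> | y. labs y \<le> u}" if "0 \<le> u"
proof -
  obtain K where K: "\<And>x. norm (f x) \<le> norm x * K" "K > 0"
    using pos_bounded by blast
  have "\<bar>f y\<bar> \<le> norm u * K" if "labs y \<le> u" for y
    using order_trans[OF K(1)[of y]
        mult_right_mono[OF norm_le_if_labs_le_nonneg[OF that \<open>0 \<le> u\<close>] less_imp_le[OF K(2)]]]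
    by simp
  then show ?thesis unfolding bdd_above_def by blast
qed

lemma abs_le_dual_abs_pos: "0 \<le> u \<Longrightarrow> labs y \<le> u \<Longrightarrow> \<bar>f y\<bar> \<le> dual_abs_pos f u"
  unfolding dual_abs_pos_def by (rule cSup_upper) (auto intro: dual_abs_pos_bdd_above)

lemma dual_abs_pos_least:
  assumes "0 \<le> u" "\<And>y. labs y \<le> u \<Longrightarrow> \<bar>f y\<bar> \<le> B"
  shows "dual_abs_pos f u \<le> B"
proof -
  have "labs 0 \<le> u" using assms(1) by simp
  then show ?thesis unfolding dual_abs_pos_def by (intro cSup_least) (blast, auto intro: assms(2))
qed

lemma dual_abs_pos_nonneg: "0 \<le> u \<Longrightarrow> 0 \<le> dual_abs_pos f u"
  using abs_le_dual_abs_pos[of u 0] by simp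

lemma dual_abs_pos_zero [simp]: "dual_abs_pos f 0 = 0"
  using dual_abs_pos_least[of 0 0] dual_abs_pos_nonneg[of 0] by (simp add: labs_le_zero_iff)

lemma dual_abs_pos_mono: "0 \<le> u \<Longrightarrow> u \<le> v \<Longrightarrow> dual_abs_pos f u \<le> dual_abs_pos f v"
  by (rule dual_abs_pos_least) (auto intro!: abs_le_dual_abs_pos)

lemma dual_abs_pos_le_norm: "\<exists>K\<ge>0. \<forall>u. 0 \<le> u \<longrightarrow> dual_abs_pos f u \<le> K * norm u"
proof -
  obtain K where K: "\<And>x. norm (f x) \<le> norm x * K" "K > 0"
    using pos_bounded by blast
  have "dual_abs_pos f u \<le> K * norm u" if u: "0 \<le> u" for u
  proof (rule dual_abs_pos_least[OF u])
    fix y assume "labs y \<le> u"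
    then have "norm y \<le> norm u" using u by (rule norm_le_if_labs_le_nonneg)
    from order_trans[OF K(1)[of y] mult_right_mono[OF this less_imp_le[OF K(2)]]]
    show "\<bar>f y\<bar> \<le> K * norm u"
      by (simp add: mult.commute)
  qed
  then show ?thesis using K(2) by (auto intro!: exI[of _ K])
qed

lemma flip_sign_to_abs: "\<exists>y'. labs y' = labs y \<and> f y' = \<bar>f y\<bar>"
proof (cases "f y \<ge> 0")
  case False
  then show ?thesis by (intro exI[of _ "- y"]) (simp add: neg)
qed auto

lemma abs_add_abs_le_dual_abs_pos:
  assumes "0 \<le> u" "0 \<le> v" "labs y1 \<le> u" "labs y2 \<le> v"
  shows "\<bar>f y1\<bar> + \<bar>f y2\<bar> \<le> dual_abs_pos f (u + v)"
proof -
  obtain y1' y2' where y': "labs y1' = labs y1" "f y1' = \<bar>f y1\<bar>"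
    "labs y2' = labs y2" "f y2' = \<bar>f y2\<bar>"
    using flip_sign_to_abs by meson
  have "labs (y1' + y2') \<le> u + v"
    using labs_triangle[of y1' y2'] add_mono[OF assms(3,4)] y' by simp
  then have "\<bar>f (y1' + y2')\<bar> \<le> dual_abs_pos f (u + v)"
    using assms(1,2) by (intro abs_le_dual_abs_pos) simp_all
  then show ?thesis using y' add by simp
qed

lemma dual_abs_pos_add:
  assumes u: "0 \<le> u" and v: "0 \<le> v"
  shows "dual_abs_pos f (u + v) = dual_abs_pos f u + dual_abs_pos f v"
proof (rule antisym)
  show "dual_abs_pos f (u + v) \<le> dual_abs_pos f u + dual_abs_pos f v"
  proof (rule dual_abs_pos_least)
    fix y assume "labs y \<le> u + v"
    then obtain z1 z2 where z: "y = z1 + z2" "labs z1 \<le> u" "labs z2 \<le> v"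
      using riesz_decomposition[OF u v] by blast
    have "\<bar>f y\<bar> \<le> \<bar>f z1\<bar> + \<bar>f z2\<bar>" using z(1) add by simp
    also have "\<dots> \<le> dual_abs_pos f u + dual_abs_pos f v"
      using abs_le_dual_abs_pos[OF u z(2)] abs_le_dual_abs_pos[OF v z(3)] by simp
    finally show "\<bar>f y\<bar> \<le> dual_abs_pos f u + dual_abs_pos f v" .
  qed (use u v in simp)
next
  have "dual_abs_pos f u \<le> dual_abs_pos f (u + v) - \<bar>f y2\<bar>" if "labs y2 \<le> v" for y2
    using abs_add_abs_le_dual_abs_pos[OF u v _ that] by (intro dual_abs_pos_least[OF u]) force
  then have "dual_abs_pos f v \<le> dual_abs_pos f (u + v) - dual_abs_pos f u"
    by (intro dual_abs_pos_least[OF v]) force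
  then show "dual_abs_pos f u + dual_abs_pos f v \<le> dual_abs_pos f (u + v)" by simp
qed

lemma dual_abs_pos_scaleR_le:
  assumes c: "0 < c" and u: "0 \<le> u"
  shows "dual_abs_pos f (c *\<^sub>R u) \<le> c * dual_abs_pos f u"
proof (rule dual_abs_pos_least)
  show "0 \<le> c *\<^sub>R u" using c u by (simp add: scaleR_nonneg_nonneg)
  fix y assume y: "labs y \<le> c *\<^sub>R u"
  have "labs ((1/c) *\<^sub>R y) \<le> (1/c) *\<^sub>R labs y" by (rule labs_scaleR_le) (use c in simp)
  also have "\<dots> \<le> u" using scaleR_left_mono[OF y, of "1/c"] c by simp
  finally have "\<bar>f ((1/c) *\<^sub>R y)\<bar> \<le> dual_abs_pos f u" by (rule abs_le_dual_abs_pos[OF u])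
  then show "\<bar>f y\<bar> \<le> c * dual_abs_pos f u" using c by (simp add: scaleR abs_mult field_simps)
qed

lemma dual_abs_pos_scaleR:
  assumes c: "0 \<le> c" and u: "0 \<le> u"
  shows "dual_abs_pos f (c *\<^sub>R u) = c * dual_abs_pos f u"
proof (cases "c = 0")
  case False
  then have c: "0 < c" using c by simp
  have "dual_abs_pos f u = dual_abs_pos f ((1/c) *\<^sub>R (c *\<^sub>R u))" using c by simp
  also have "\<dots> \<le> (1/c) * dual_abs_pos f (c *\<^sub>R u)"
    using c u by (intro dual_abs_pos_scaleR_le) (auto simp: scaleR_nonneg_nonneg)
  finally show ?thesis using dual_abs_pos_scaleR_le[OF c u] c by (simp add: field_simps)
qed simp

lemma dual_abs_eq: "dual_abs f x = dual_abs_pos f (pprt x) - dual_abs_pos f (pprt (- x))"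
  by (simp add: dual_abs_def pprt_def)

lemma dual_abs_diff:
  assumes "0 \<le> a" "0 \<le> b"
  shows "dual_abs f (a - b) = dual_abs_pos f a - dual_abs_pos f b"
proof -
  have "pprt (a - b) + b = a + pprt (- (a - b))"
    using pprt_minus_pprt_uminus[of "a - b"] by (simp add: algebra_simps)
  then have "dual_abs_pos f (pprt (a - b) + b) = dual_abs_pos f (a + pprt (- (a - b)))"
    by simp
  then show ?thesis using assms by (simp add: dual_abs_eq dual_abs_pos_add)
qed

lemma dual_abs_of_nonneg: "0 \<le> u \<Longrightarrow> dual_abs f u = dual_abs_pos f u"
  using dual_abs_diff[of u 0] by simp

lemma dual_abs_add: "dual_abs f (x + y) = dual_abs f x + dual_abs f y"
proof -
  have "x + y = (pprt x + pprt y) - (pprt (- x) + pprt (- y))"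
    using pprt_minus_pprt_uminus[of x] pprt_minus_pprt_uminus[of y] by (simp add: algebra_simps)
  then show ?thesis
    by (simp add: dual_abs_diff dual_abs_eq[of x] dual_abs_eq[of y] dual_abs_pos_add)
qed

lemma dual_abs_minus: "dual_abs f (- x) = - dual_abs f x"
  by (simp add: dual_abs_eq)

lemma dual_abs_scaleR: "dual_abs f (r *\<^sub>R x) = r * dual_abs f x"
proof -
  have nonneg: "dual_abs f (c *\<^sub>R x) = c * dual_abs f x" if "0 \<le> c" for c
  proof -
    have "dual_abs f (c *\<^sub>R x) = dual_abs f (c *\<^sub>R pprt x - c *\<^sub>R pprt (- x))"
      by (metis pprt_minus_pprt_uminus scaleR_diff_right)
    then show ?thesis
      using that
      by (simp add: dual_abs_diff dual_abs_eq[of x] dual_abs_pos_scaleR right_diff_distrib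
          scaleR_nonneg_nonneg)
  qed
  show ?thesis
  proof (cases "0 \<le> r")
    case False
    then have "dual_abs f (- ((- r) *\<^sub>R x)) = r * dual_abs f x"
      by (simp only: dual_abs_minus nonneg)
    then show ?thesis by simp
  qed (rule nonneg)
qed

lemma bounded_linear_dual_abs: "bounded_linear (dual_abs f)"
proof -
  obtain K where K: "K \<ge> 0" "\<And>u. 0 \<le> u \<Longrightarrow> dual_abs_pos f u \<le> K * norm u"
    using dual_abs_pos_le_norm by blast
  have "\<bar>dual_abs f x\<bar> \<le> norm x * (2 * K)" for x
  proof -
    have norm_pprt: "norm (pprt z) \<le> norm z" for z :: 'a
      by (rule norm_le_if_labs_le) (simp add: labs_of_nonneg pprt_le_labs)
    have "\<bar>dual_abs f x\<bar> \<le> dual_abs_pos f (pprt x) + dual_abs_pos f (pprt (- x))"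
      using dual_abs_pos_nonneg[of "pprt x"] dual_abs_pos_nonneg[of "pprt (- x)"]
      by (simp add: dual_abs_eq)
    also have "\<dots> \<le> K * norm (pprt x) + K * norm (pprt (- x))"
      using K(2)[of "pprt x"] K(2)[of "pprt (- x)"] by simp
    also have "\<dots> \<le> K * norm x + K * norm x"
      using mult_left_mono[OF norm_pprt[of x] K(1)] mult_left_mono[OF norm_pprt[of "- x"] K(1)]
      by simp
    finally show ?thesis by (simp add: algebra_simps)
  qed
  then show ?thesis
    by (intro bounded_linear_intro[where K="2 * K"]) (auto simp: dual_abs_add dual_abs_scaleR)
qed

lemma abs_le_dual_abs_labs: "labs x \<le> labs y \<Longrightarrow> \<bar>f x\<bar> \<le> dual_abs f (labs y)"
  using abs_le_dual_abs_pos[OF labs_nonneg order_refl, of x]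
    dual_abs_pos_mono[OF labs_nonneg, of x "labs y"]
  by (simp add: dual_abs_of_nonneg labs_nonneg)

lemma dual_abs_dual_abs: "dual_abs (dual_abs f) = dual_abs f"
proof -
  interpret abs_f: lattice_functional "dual_abs f"
    using bounded_linear_dual_abs by (simp add: lattice_functional_def)
  have "dual_abs_pos (dual_abs f) u = dual_abs_pos f u" if u: "0 \<le> u" for u
  proof (rule antisym)
    show "dual_abs_pos (dual_abs f) u \<le> dual_abs_pos f u"
    proof (rule abs_f.dual_abs_pos_least[OF u])
      fix y assume y: "labs y \<le> u"
      have "dual_abs_pos f (pprt z) \<le> dual_abs_pos f u" if "labs z \<le> u" for z
        using dual_abs_pos_mono[OF zero_le_pprt order_trans[OF pprt_le_labs that]] .
      from this[of y] this[of "- y"] y show "\<bar>dual_abs f y\<bar> \<le> dual_abs_pos f u"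
        using dual_abs_pos_nonneg[OF zero_le_pprt, of y]
          dual_abs_pos_nonneg[OF zero_le_pprt, of "- y"]
        by (simp add: dual_abs_eq abs_le_iff)
    qed
    show "dual_abs_pos f u \<le> dual_abs_pos (dual_abs f) u"
      using abs_f.abs_le_dual_abs_pos[OF u, of u] u
      by (simp add: labs_of_nonneg dual_abs_of_nonneg)
  qed
  then show ?thesis by (simp add: fun_eq_iff dual_abs_def)
qed

end

section \<open>The weak topology of c_0\<close>

lemma zero_in_c0_dual: "(\<lambda>_. 0) \<in> c0_dual"
  unfolding c0_dual_def by (auto intro!: exI[of _ 0])

lemma topspace_c0_weak: "topspace c0_weak = c0"
proof -
  have "\<Union>{{s \<in> c0. \<phi> s \<in> U} | \<phi> U. \<phi> \<in> c0_dual \<and> open U} = c0"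
  proof
    show "c0 \<subseteq> \<Union>{{s \<in> c0. \<phi> s \<in> U} | \<phi> U. \<phi> \<in> c0_dual \<and> open U}"
      using zero_in_c0_dual by (auto intro!: exI[of _ "{s \<in> c0. (\<lambda>_. 0::real) s \<in> UNIV}"])
  qed auto
  then show ?thesis unfolding c0_weak_def by simp
qed

lemma continuous_map_c0_dual:
  assumes "\<phi> \<in> c0_dual"
  shows "continuous_map c0_weak euclidean \<phi>"
  unfolding continuous_map_def
proof (intro conjI allI impI)
  fix U :: "real set" assume "openin euclidean U"
  have "openin c0_weak {s \<in> c0. \<phi> s \<in> U}" unfolding c0_weak_def
    by (rule topology_generated_by_Basis) (use assms \<open>openin euclidean U\<close> in auto)
  then show "openin c0_weak {x \<in> topspace c0_weak. \<phi> x \<in> U}" by (simp add: topspace_c0_weak)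
qed auto

lemma continuous_map_into_c0_weak:
  assumes "\<And>p. p \<in> topspace X \<Longrightarrow> f p \<in> c0"
    and "\<And>\<phi>. \<phi> \<in> c0_dual \<Longrightarrow> continuous_map X euclidean (\<lambda>p. \<phi> (f p))"
  shows "continuous_map X c0_weak f"
proof -
  have "\<Union>{{s \<in> c0. \<phi> s \<in> U} | \<phi> U. \<phi> \<in> c0_dual \<and> open U} = c0"
    using topspace_c0_weak unfolding c0_weak_def by simp
  then show ?thesis unfolding c0_weak_def continuous_on_generated_topo_iff
  proof (intro conjI allI impI)
    fix W assume "W \<in> {{s \<in> c0. \<phi> s \<in> U} | \<phi> U. \<phi> \<in> c0_dual \<and> open U}"
    then obtain \<phi> U where W: "W = {s \<in> c0. \<phi> s \<in> U}" and "\<phi> \<in> c0_dual" "open U" by blast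
    then have "openin X {p \<in> topspace X. \<phi> (f p) \<in> U}"
      using assms(2) by (intro openin_continuous_map_preimage) auto
    moreover have "f -` W \<inter> topspace X = {p \<in> topspace X. \<phi> (f p) \<in> U}"
      using assms(1) W by auto
    ultimately show "openin X (f -` W \<inter> topspace X)" by simp
  qed (use assms(1) in auto)
qed

lemma c0_imp_bounded: "s \<in> c0 \<Longrightarrow> \<exists>B. \<forall>n. \<bar>s n\<bar> \<le> B"
  unfolding c0_def using convergent_imp_Bseq[of s] by (auto simp: convergent_def Bseq_def)

lemma abs_le_c0_norm: "s \<in> c0 \<Longrightarrow> \<bar>s n\<bar> \<le> c0_norm s"
  unfolding c0_norm_def using c0_imp_bounded[of s]
  by (intro cSUP_upper) (auto simp: bdd_above_def)

lemma c0_norm_le: "(\<And>n. \<bar>s n\<bar> \<le> B) \<Longrightarrow> c0_norm s \<le> B"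
  unfolding c0_norm_def by (intro cSUP_least) auto

lemma c0_norm_nonneg: "s \<in> c0 \<Longrightarrow> 0 \<le> c0_norm s"
  using abs_le_c0_norm[of s 0] by linarith

lemma c0_diff: "s \<in> c0 \<Longrightarrow> t \<in> c0 \<Longrightarrow> (\<lambda>n. s n - t n) \<in> c0"
  unfolding c0_def using tendsto_diff by fastforce

lemma c0_if_eventually_zero:
  assumes "\<And>k. N \<le> k \<Longrightarrow> s k = 0"
  shows "s \<in> c0"
proof -
  have "eventually (\<lambda>k. s k = 0) sequentially"
    using assms by (rule eventually_sequentiallyI)
  then show ?thesis unfolding c0_def by (simp add: tendsto_eventually)
qed

lemma c0_eventually_abs_less: "s \<in> c0 \<Longrightarrow> 0 < r \<Longrightarrow> \<exists>N. \<forall>n\<ge>N. \<bar>s n\<bar> < r"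
  unfolding c0_def LIMSEQ_iff by simp

lemma c0_dual_diff:
  assumes "\<phi> \<in> c0_dual" "s \<in> c0" "t \<in> c0"
  shows "\<phi> (\<lambda>n. s n - t n) = \<phi> s - \<phi> t"
proof -
  have "\<phi> (\<lambda>n. 1 * s n + (- 1) * t n) = 1 * \<phi> s + (- 1) * \<phi> t"
    using assms unfolding c0_dual_def by blast
  then show ?thesis by simp
qed

lemma c0_dual_bound:
  assumes "\<phi> \<in> c0_dual"
  obtains K where "0 \<le> K" "\<And>s. s \<in> c0 \<Longrightarrow> \<bar>\<phi> s\<bar> \<le> K * c0_norm s"
proof -
  obtain K where K: "\<And>s. s \<in> c0 \<Longrightarrow> \<bar>\<phi> s\<bar> \<le> K * c0_norm s"
    using assms unfolding c0_dual_def by blast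
  have "\<bar>\<phi> s\<bar> \<le> max K 0 * c0_norm s" if "s \<in> c0" for s
    using K[OF that] mult_right_mono[OF max.cobounded1 c0_norm_nonneg[OF that], of K 0] by simp
  then show ?thesis using that[of "max K 0"] by simp
qed

definition unit_seq :: "nat \<Rightarrow> nat \<Rightarrow> real" where
  "unit_seq n = (\<lambda>k. if k = n then 1 else 0)"

definition trunc_seq :: "nat \<Rightarrow> (nat \<Rightarrow> real) \<Rightarrow> nat \<Rightarrow> real" where
  "trunc_seq N s = (\<lambda>k. if k < N then s k else 0)"

lemma unit_seq_in_c0: "unit_seq n \<in> c0"
  by (rule c0_if_eventually_zero[of "Suc n"]) (auto simp: unit_seq_def)

lemma trunc_seq_in_c0: "trunc_seq N s \<in> c0"
  by (rule c0_if_eventually_zero[of N]) (auto simp: trunc_seq_def)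

lemma c0_dual_trunc_seq:
  assumes "\<phi> \<in> c0_dual"
  shows "\<phi> (trunc_seq N s) = (\<Sum>n<N. \<phi> (unit_seq n) * s n)"
proof (induction N)
  case 0
  have "\<phi> (trunc_seq 0 s) = \<phi> (\<lambda>n. trunc_seq 0 s n - trunc_seq 0 s n)"
    by (simp add: trunc_seq_def)
  also have "\<dots> = \<phi> (trunc_seq 0 s) - \<phi> (trunc_seq 0 s)"
    by (rule c0_dual_diff[OF assms trunc_seq_in_c0 trunc_seq_in_c0])
  finally show ?case by simp
next
  case (Suc N)
  have "trunc_seq (Suc N) s = (\<lambda>k. 1 * trunc_seq N s k + s N * unit_seq N k)"
    by (auto simp: trunc_seq_def unit_seq_def less_Suc_eq)
  moreover have "\<phi> (\<lambda>k. 1 * trunc_seq N s k + s N * unit_seq N k)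
      = 1 * \<phi> (trunc_seq N s) + s N * \<phi> (unit_seq N)"
    using assms trunc_seq_in_c0 unit_seq_in_c0 unfolding c0_dual_def by blast
  ultimately show ?case using Suc by simp
qed

lemma c0_dual_summable:
  assumes "\<phi> \<in> c0_dual"
  shows "summable (\<lambda>n. \<bar>\<phi> (unit_seq n)\<bar>)"
proof -
  obtain K where K: "0 \<le> K" "\<And>s. s \<in> c0 \<Longrightarrow> \<bar>\<phi> s\<bar> \<le> K * c0_norm s"
    using c0_dual_bound[OF assms] by blast
  show ?thesis
  proof (rule summableI_nonneg_bounded)
    fix N
    define s where "s = trunc_seq N (\<lambda>n. sgn (\<phi> (unit_seq n)))"
    have "(\<Sum>n<N. \<bar>\<phi> (unit_seq n)\<bar>) = \<phi> s"
      unfolding s_def c0_dual_trunc_seq[OF assms] by (intro sum.cong) (auto simp: sgn_if)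
    also have "\<dots> \<le> K * c0_norm s" using K(2)[of s] trunc_seq_in_c0 by (simp add: s_def)
    also have "\<dots> \<le> K"
      using mult_left_mono[OF c0_norm_le K(1), of s 1] by (simp add: s_def trunc_seq_def abs_sgn_eq)
    finally show "(\<Sum>n<N. \<bar>\<phi> (unit_seq n)\<bar>) \<le> K" .
  qed simp
qed

lemma c0_dual_eq_suminf:
  assumes "\<phi> \<in> c0_dual" "s \<in> c0"
  shows "\<phi> s = (\<Sum>n. \<phi> (unit_seq n) * s n)"
proof -
  obtain K where K: "0 \<le> K" "\<And>s. s \<in> c0 \<Longrightarrow> \<bar>\<phi> s\<bar> \<le> K * c0_norm s"
    using c0_dual_bound[OF assms(1)] by blast
  have "(\<lambda>N. \<phi> (trunc_seq N s)) \<longlonglongrightarrow> \<phi> s"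
  proof (rule LIMSEQ_I)
    fix r :: real assume "0 < r"
    then have q: "0 < r / (K + 1)" using K(1) by simp
    obtain N0 where N0: "\<And>n. N0 \<le> n \<Longrightarrow> \<bar>s n\<bar> < r / (K + 1)"
      using c0_eventually_abs_less[OF assms(2) q] by blast
    have "norm (\<phi> (trunc_seq N s) - \<phi> s) < r" if "N0 \<le> N" for N
    proof -
      have "\<bar>s k - trunc_seq N s k\<bar> \<le> r / (K + 1)" for k
        using N0[of k] that q by (cases "k < N") (auto simp: trunc_seq_def)
      then have "c0_norm (\<lambda>k. s k - trunc_seq N s k) \<le> r / (K + 1)"
        by (rule c0_norm_le)
      then have "K * c0_norm (\<lambda>k. s k - trunc_seq N s k) \<le> K * (r / (K + 1))"
        using K(1) by (rule mult_left_mono)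
      with K(2)[OF c0_diff[OF assms(2) trunc_seq_in_c0[of N s]]]
      have "\<bar>\<phi> (\<lambda>k. s k - trunc_seq N s k)\<bar> \<le> K * (r / (K + 1))"
        by linarith
      also have "\<dots> < r" using \<open>0 < r\<close> K(1) by (simp add: field_simps)
      finally show ?thesis
        using c0_dual_diff[OF assms trunc_seq_in_c0] by (simp add: abs_minus_commute)
    qed
    then show "\<exists>no. \<forall>N\<ge>no. norm (\<phi> (trunc_seq N s) - \<phi> s) < r" by blast
  qed
  then have "(\<lambda>n. \<phi> (unit_seq n) * s n) sums \<phi> s"
    unfolding sums_def c0_dual_trunc_seq[OF assms(1)] .
  then show ?thesis by (simp add: sums_iff)
qed

lemma l1_times_c0_summable:
  assumes "summable (\<lambda>n. \<bar>a n\<bar>)" "s \<in> c0"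
  shows "summable (\<lambda>n. \<bar>a n * s n\<bar>)"
  by (rule summable_comparison_test[OF _ summable_mult2[OF assms(1), of "c0_norm s"]])
    (auto simp: abs_mult abs_le_c0_norm assms(2) mult_left_mono)

lemma l1_functional_in_c0_dual:
  assumes a: "summable (\<lambda>n. \<bar>a n\<bar>)"
  shows "(\<lambda>s. \<Sum>n. a n * s n) \<in> c0_dual"
  unfolding c0_dual_def
proof (intro CollectI conjI ballI allI exI)
  fix s t x y assume st: "s \<in> c0" "t \<in> c0"
  note sm = summable_rabs_cancel[OF l1_times_c0_summable[OF a st(1)]]
    summable_rabs_cancel[OF l1_times_c0_summable[OF a st(2)]]
  have "(\<Sum>n. a n * (x * s n + y * t n)) = (\<Sum>n. x * (a n * s n) + y * (a n * t n))"
    by (simp add: algebra_simps)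
  also have "\<dots> = x * (\<Sum>n. a n * s n) + y * (\<Sum>n. a n * t n)"
    using sm by (simp add: suminf_add[symmetric] summable_mult suminf_mult)
  finally show "(\<Sum>n. a n * (x * s n + y * t n)) = x * (\<Sum>n. a n * s n) + y * (\<Sum>n. a n * t n)" .
next
  fix s assume s: "s \<in> c0"
  note sm = l1_times_c0_summable[OF a s]
  have "\<bar>\<Sum>n. a n * s n\<bar> \<le> (\<Sum>n. \<bar>a n * s n\<bar>)" by (rule summable_rabs[OF sm])
  also have "\<dots> \<le> (\<Sum>n. \<bar>a n\<bar> * c0_norm s)"
    by (rule suminf_le[OF _ sm summable_mult2[OF a]])
      (simp add: abs_mult abs_le_c0_norm s mult_left_mono)
  also have "\<dots> = (\<Sum>n. \<bar>a n\<bar>) * c0_norm s" by (rule suminf_mult2[symmetric, OF a])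
  finally show "\<bar>\<Sum>n. a n * s n\<bar> \<le> (\<Sum>n. \<bar>a n\<bar>) * c0_norm s" .
qed

lemma continuous_map_c0_coordinate: "continuous_map c0_weak euclidean (\<lambda>s. s n)"
  by (rule continuous_map_c0_dual) (auto simp: c0_dual_def intro!: exI[of _ 1] abs_le_c0_norm)

lemma Hausdorff_space_c0_weak: "Hausdorff_space c0_weak"
  unfolding Hausdorff_space_def topspace_c0_weak
proof (intro allI impI)
  fix x y assume xy: "x \<in> c0 \<and> y \<in> c0 \<and> x \<noteq> y"
  then obtain n where n: "x n \<noteq> y n" by blast
  define r where "r = \<bar>x n - y n\<bar> / 2"
  define U where "U = {s \<in> topspace c0_weak. s n \<in> ball (x n) r}"
  define V where "V = {s \<in> topspace c0_weak. s n \<in> ball (y n) r}"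
  have "openin c0_weak U" "openin c0_weak V" unfolding U_def V_def
    by (intro openin_continuous_map_preimage[OF continuous_map_c0_coordinate]; simp)+
  moreover have "x \<in> U" "y \<in> V" using xy n by (auto simp: U_def V_def r_def topspace_c0_weak)
  moreover have "disjnt U V"
    unfolding disjnt_def U_def V_def r_def
    by (auto simp: dist_real_def) (smt (verit) abs_minus_commute abs_triangle_ineq4)
  ultimately show "\<exists>U V. openin c0_weak U \<and> openin c0_weak V \<and> x \<in> U \<and> y \<in> V \<and> disjnt U V"
    by blast
qed

section \<open>Weakly compact subsets of c_0\<close>

lemma summable_abs_unit_seq: "summable (\<lambda>k. \<bar>unit_seq n k\<bar>)"
  by (rule summable_finite[of "{n}"]) (auto simp: unit_seq_def)

lemma suminf_unit_seq_mult: "(\<Sum>k. unit_seq n k * t k) = t n"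
proof -
  have "(\<lambda>k. unit_seq n k * t k) = (\<lambda>k. if k = n then t k else 0)"
    by (auto simp: unit_seq_def)
  then show ?thesis using sums_single[of n t] by (simp add: sums_iff)
qed

lemma unbounded_beyond:
  fixes K :: "(nat \<Rightarrow> real) set"
  assumes "\<And>t n. t \<in> K \<Longrightarrow> \<bar>t n\<bar> \<le> C n" and "\<nexists>M. \<forall>t\<in>K. \<forall>n. \<bar>t n\<bar> \<le> M"
  shows "\<exists>t\<in>K. \<exists>n\<ge>N. M < \<bar>t n\<bar>"
proof (rule ccontr)
  assume "\<not> (\<exists>t\<in>K. \<exists>n\<ge>N. M < \<bar>t n\<bar>)"
  then have beyond: "\<bar>t n\<bar> \<le> M" if "t \<in> K" "N \<le> n" for t n
    using that by force
  have "\<bar>t n\<bar> \<le> \<bar>M\<bar> + (\<Sum>k<N. \<bar>C k\<bar>)" if "t \<in> K" for t n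
  proof (cases "n < N")
    case True
    have "\<bar>C n\<bar> \<le> (\<Sum>k<N. \<bar>C k\<bar>)" by (rule member_le_sum) (use True in auto)
    then show ?thesis using assms(1)[OF that, of n] by linarith
  next
    case False
    have "0 \<le> (\<Sum>k<N. \<bar>C k\<bar>)" by (rule sum_nonneg) simp
    then show ?thesis using beyond[OF that, of n] False by linarith
  qed
  then show False using assms(2) by blast
qed

text \<open>The gliding hump: tt k peaks at nn k above 2^k times the largest possible contribution
  A k of the earlier humps, and all later humps lie beyond L (Suc k), where tt k is below 1.\<close>

lemma gliding_hump_recursion:
  fixes K :: "(nat \<Rightarrow> real) set" and C :: "nat \<Rightarrow> real"
  assumes K: "K \<subseteq> c0" and escape: "\<And>N M. \<exists>t\<in>K. \<exists>n\<ge>N. M < \<bar>t n\<bar>"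
  obtains nn L :: "nat \<Rightarrow> nat" and tt :: "nat \<Rightarrow> nat \<Rightarrow> real" and A :: "nat \<Rightarrow> real"
  where "A 0 = 0" "\<And>k. A (Suc k) = A k + C (nn k) / 2^k"
    "\<And>k. tt k \<in> K" "\<And>k. 2^k * (real k + 3 + A k) < \<bar>tt k (nn k)\<bar>"
    "\<And>k. L k \<le> nn k" "\<And>k. nn k < L (Suc k)" "\<And>k. L k \<le> L (Suc k)"
    "\<And>k i. L (Suc k) \<le> i \<Longrightarrow> \<bar>tt k i\<bar> \<le> 1"
proof -
  define P where "P k x \<longleftrightarrow> (case x of (n, t, A, L) \<Rightarrow>
      t \<in> K \<and> L \<le> n \<and> 2^k * (real k + 3 + A) < \<bar>t n\<bar> \<and> (k = 0 \<longrightarrow> A = 0))"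
    for k and x :: "nat \<times> (nat \<Rightarrow> real) \<times> real \<times> nat"
  define Q where "Q k x y \<longleftrightarrow> (case x of (n, t, A, L) \<Rightarrow> case y of (n', t', A', L') \<Rightarrow>
      A' = A + C n / 2^k \<and> n < L' \<and> L \<le> L' \<and> (\<forall>i\<ge>L'. \<bar>t i\<bar> \<le> 1))"
    for k and x y :: "nat \<times> (nat \<Rightarrow> real) \<times> real \<times> nat"
  have "\<exists>f. \<forall>k. P k (f k) \<and> Q k (f k) (f (Suc k))"
  proof (rule dependent_nat_choice)
    obtain t n where "t \<in> K" "3 < \<bar>t n\<bar>" using escape[of 0 3] by blast
    then have "P 0 (n, t, 0, 0)" by (simp add: P_def)
    then show "\<exists>x. P 0 x" ..
  next
    fix x k assume "P k x"
    then obtain n t A L where x: "x = (n, t, A, L)" "t \<in> K"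
      by (auto simp: P_def split: prod.splits)
    obtain N where "\<forall>i\<ge>N. \<bar>t i\<bar> < 1"
      using c0_eventually_abs_less[of t 1] x(2) K by auto
    then have N: "\<And>i. N \<le> i \<Longrightarrow> \<bar>t i\<bar> \<le> 1" by (simp add: less_imp_le)
    define A' where "A' = A + C n / 2^k"
    define L' where "L' = max (Suc n) (max L N)"
    obtain t' n' where "t' \<in> K" "L' \<le> n'" "2^Suc k * (real (Suc k) + 3 + A') < \<bar>t' n'\<bar>"
      using escape by blast
    then show "\<exists>y. P (Suc k) y \<and> Q k x y"
      using N by (intro exI[of _ "(n', t', A', L')"]) (auto simp: P_def Q_def x A'_def L'_def)
  qed
  then obtain f where f: "\<And>k. P k (f k)" "\<And>k. Q k (f k) (f (Suc k))" by blast
  show ?thesis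
  proof (rule that)
    define nn tt A L where "nn k = fst (f k)" and "tt k = fst (snd (f k))"
      and "A k = fst (snd (snd (f k)))" and "L k = snd (snd (snd (f k)))" for k
    show "A 0 = 0" "tt k \<in> K" "2^k * (real k + 3 + A k) < \<bar>tt k (nn k)\<bar>" "L k \<le> nn k" for k
      using f(1)[of k] f(1)[of 0] by (auto simp: P_def nn_def tt_def A_def L_def split: prod.splits)
    show "A (Suc k) = A k + C (nn k) / 2^k" "nn k < L (Suc k)" "L k \<le> L (Suc k)"
      "\<And>i. L (Suc k) \<le> i \<Longrightarrow> \<bar>tt k i\<bar> \<le> 1" for k
      using f(2)[of k] by (auto simp: Q_def nn_def tt_def A_def L_def split: prod.splits)
  qed
qed

lemma gliding_hump_sequence:
  fixes K :: "(nat \<Rightarrow> real) set" and C :: "nat \<Rightarrow> real"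
  assumes K: "K \<subseteq> c0" and escape: "\<And>N M. \<exists>t\<in>K. \<exists>n\<ge>N. M < \<bar>t n\<bar>"
  obtains nn :: "nat \<Rightarrow> nat" and tt :: "nat \<Rightarrow> nat \<Rightarrow> real"
  where "strict_mono nn" "\<And>k. tt k \<in> K" "\<And>j i. j < i \<Longrightarrow> \<bar>tt j (nn i)\<bar> \<le> 1"
    "\<And>k. 2^k * (real k + 3 + (\<Sum>j<k. C (nn j) / 2^j)) < \<bar>tt k (nn k)\<bar>"
proof -
  obtain nn L :: "nat \<Rightarrow> nat" and tt :: "nat \<Rightarrow> nat \<Rightarrow> real" and A :: "nat \<Rightarrow> real"
    where A: "A 0 = 0" "\<And>k. A (Suc k) = A k + C (nn k) / 2^k"
      and P: "\<And>k. tt k \<in> K" "\<And>k. 2^k * (real k + 3 + A k) < \<bar>tt k (nn k)\<bar>"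
      and L: "\<And>k. L k \<le> nn k" "\<And>k. nn k < L (Suc k)" "\<And>k. L k \<le> L (Suc k)"
      and tail: "\<And>k i. L (Suc k) \<le> i \<Longrightarrow> \<bar>tt k i\<bar> \<le> 1"
    by (rule gliding_hump_recursion[OF K escape, where C=C]) blast
  show ?thesis
  proof (rule that)
    show "strict_mono nn"
      using L(1,2) by (intro strict_monoI_Suc) (meson order.strict_trans2)
    show "tt k \<in> K" for k by (rule P(1))
    show "\<bar>tt j (nn i)\<bar> \<le> 1" if "j < i" for j i
    proof (rule tail)
      have "L (Suc j) \<le> L i" using that by (intro lift_Suc_mono_le[of L, OF L(3)]) simp
      then show "L (Suc j) \<le> nn i" using L(1)[of i] by linarith
    qed
    have "A k = (\<Sum>j<k. C (nn j) / 2^j)" for k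
      by (induction k) (simp_all add: A)
    then show "2^k * (real k + 3 + (\<Sum>j<k. C (nn j) / 2^j)) < \<bar>tt k (nn k)\<bar>" for k
      using P(2)[of k] by simp
  qed
qed

lemma abs_le_abs_suminf_add:
  fixes w e :: "nat \<Rightarrow> real"
  assumes "\<And>k. k \<noteq> m \<Longrightarrow> \<bar>w k\<bar> \<le> e k" "\<And>k. 0 \<le> e k" "summable e"
  shows "summable w" "\<bar>w m\<bar> \<le> \<bar>suminf w\<bar> + suminf e"
proof -
  define z where "z k = (if k = m then 0 else w k)" for k
  have z_le: "\<bar>z k\<bar> \<le> e k" for k using assms(1,2) by (simp add: z_def)
  have sz: "summable (\<lambda>k. \<bar>z k\<bar>)"
    by (rule summable_comparison_test[OF _ assms(3)]) (use z_le in auto)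
  have "w = (\<lambda>k. z k + (if k = m then w m else 0))" by (auto simp: z_def)
  then have ws: "w sums (suminf z + w m)"
    using sums_add[OF summable_sums[OF summable_rabs_cancel[OF sz]] sums_single[of m "\<lambda>_. w m"]]
    by simp
  then show "summable w" by (rule sums_summable)
  have "\<bar>suminf z\<bar> \<le> suminf e"
    using summable_rabs[OF sz] suminf_le[OF z_le sz assms(3)] by linarith
  then show "\<bar>w m\<bar> \<le> \<bar>suminf w\<bar> + suminf e" using ws by (simp add: sums_iff)
qed

lemma weighted_hump_lower_bound:
  fixes x c :: "nat \<Rightarrow> real"
  assumes before: "\<And>k. k < m \<Longrightarrow> \<bar>x k\<bar> \<le> c k" and after: "\<And>k. m < k \<Longrightarrow> \<bar>x k\<bar> \<le> 1"
    and c: "\<And>k. 0 \<le> c k" and hump: "2^m * (real m + 3 + (\<Sum>k<m. c k / 2^k)) < \<bar>x m\<bar>"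
  shows "summable (\<lambda>k. x k / 2^k)" "real m + 1 < \<bar>\<Sum>k. x k / 2^k\<bar>"
proof -
  define e where "e k = (if k < m then c k / 2^k else 0) + (1/2)^k" for k
  have "(\<lambda>k. if k < m then c k / 2^k else 0) sums (\<Sum>k<m. c k / 2^k)"
    using sums_If_finite_set[of "{..<m}" "\<lambda>k. c k / 2^k"] by (simp add: lessThan_def)
  then have es: "e sums ((\<Sum>k<m. c k / 2^k) + 2)"
    unfolding e_def by (intro sums_add) (simp_all add: geometric_sums[of "1/2::real", simplified])
  have e_bound: "\<bar>x k / 2^k\<bar> \<le> e k" if "k \<noteq> m" for k
  proof (cases "k < m")
    case True
    have "\<bar>x k\<bar> / 2^k \<le> c k / 2^k" using before[OF True] by (intro divide_right_mono) auto
    moreover have "0 \<le> (1/2::real)^k" by simp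
    ultimately show ?thesis using True by (simp add: e_def abs_divide add_increasing2)
  next
    case False
    then have "\<bar>x k\<bar> / 2^k \<le> 1 / 2^k" using after that by (intro divide_right_mono) auto
    then show ?thesis using False by (simp add: e_def abs_divide power_one_over)
  qed
  have e_nonneg: "0 \<le> e k" for k using c by (simp add: e_def)
  note bound = abs_le_abs_suminf_add[where m=m and w="\<lambda>k. x k / 2^k" and e=e,
      OF e_bound e_nonneg sums_summable[OF es]]
  show "summable (\<lambda>k. x k / 2^k)" using bound(1) by blast
  have "real m + 3 + (\<Sum>k<m. c k / 2^k) < \<bar>x m / 2^m\<bar>"
    using hump by (simp add: abs_divide field_simps)
  then show "real m + 1 < \<bar>\<Sum>k. x k / 2^k\<bar>"
    using bound(2) es by (simp add: sums_iff)
qed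

definition spread_seq :: "(nat \<Rightarrow> nat) \<Rightarrow> (nat \<Rightarrow> real) \<Rightarrow> nat \<Rightarrow> real" where
  "spread_seq nn x n = (if n \<in> range nn then x (inv nn n) else 0)"

lemma spread_seq_mult_sums_iff:
  assumes "strict_mono nn"
  shows "(\<lambda>n. spread_seq nn x n * t n) sums S \<longleftrightarrow> (\<lambda>k. x k * t (nn k)) sums S"
proof -
  have "inj nn" using assms by (rule strict_mono_imp_inj_on)
  then have "spread_seq nn x (nn k) = x k" for k by (simp add: spread_seq_def)
  then show ?thesis
    using sums_mono_reindex[OF assms, of "\<lambda>n. spread_seq nn x n * t n"]
    by (simp add: spread_seq_def)
qed

lemma c0_bounded_if_l1_bounded:
  fixes K :: "(nat \<Rightarrow> real) set"
  assumes K: "K \<subseteq> c0"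
    and l1_bounded: "\<And>a. summable (\<lambda>n. \<bar>a n\<bar>) \<Longrightarrow> \<exists>B. \<forall>t\<in>K. \<bar>\<Sum>n. a n * t n\<bar> \<le> B"
  shows "\<exists>M. \<forall>t\<in>K. \<forall>n. \<bar>t n\<bar> \<le> M"
proof (rule ccontr)
  assume unbounded: "\<nexists>M. \<forall>t\<in>K. \<forall>n. \<bar>t n\<bar> \<le> M"
  have "\<exists>B. \<forall>t\<in>K. \<bar>t n\<bar> \<le> B" for n
    using l1_bounded[OF summable_abs_unit_seq] by (simp add: suminf_unit_seq_mult)
  then obtain C where C: "\<And>n t. t \<in> K \<Longrightarrow> \<bar>t n\<bar> \<le> C n" by metis
  have C': "\<bar>t n\<bar> \<le> \<bar>C n\<bar>" if "t \<in> K" for t n using C[OF that, of n] by linarith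
  have escape: "\<exists>t\<in>K. \<exists>n\<ge>N. M < \<bar>t n\<bar>" for N M
    using C' unbounded by (rule unbounded_beyond)
  obtain nn tt where nn: "strict_mono nn" and tt: "\<And>k. tt k \<in> K"
    and after: "\<And>j i. j < i \<Longrightarrow> \<bar>tt j (nn i)\<bar> \<le> 1"
    and hump: "\<And>k. 2^k * (real k + 3 + (\<Sum>j<k. \<bar>C (nn j)\<bar> / 2^j)) < \<bar>tt k (nn k)\<bar>"
    by (rule gliding_hump_sequence[OF K escape, where C="\<lambda>n. \<bar>C n\<bar>"]) blast
  define a where "a = spread_seq nn (\<lambda>k. 1 / 2^k)"
  have "(\<lambda>n. spread_seq nn (\<lambda>k. 1 / 2^k) n * 1) sums 2"
    unfolding spread_seq_mult_sums_iff[OF nn] using geometric_sums[of "1/2::real"]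
    by (simp add: power_one_over)
  moreover have "\<bar>a n\<bar> = spread_seq nn (\<lambda>k. 1 / 2^k) n * 1" for n
    by (simp add: a_def spread_seq_def)
  ultimately have "summable (\<lambda>n. \<bar>a n\<bar>)" by (simp add: sums_summable)
  then obtain B where B: "\<And>t. t \<in> K \<Longrightarrow> \<bar>\<Sum>n. a n * t n\<bar> \<le> B" using l1_bounded by blast
  have "real m + 1 < \<bar>\<Sum>n. a n * tt m n\<bar>" for m
  proof -
    note lower = weighted_hump_lower_bound[of m "\<lambda>k. tt m (nn k)" "\<lambda>k. \<bar>C (nn k)\<bar>",
        OF C'[OF tt] after _ hump]
    have "(\<lambda>k. 1 / 2^k * tt m (nn k)) sums (\<Sum>k. tt m (nn k) / 2^k)"
      using summable_sums[OF lower(1)] by simp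
    then have "(\<lambda>n. a n * tt m n) sums (\<Sum>k. tt m (nn k) / 2^k)"
      unfolding a_def spread_seq_mult_sums_iff[OF nn] .
    then show ?thesis using lower(2) by (simp add: sums_iff)
  qed
  from this[of "nat \<lceil>B\<rceil>"] B[OF tt[of "nat \<lceil>B\<rceil>"]] show False by linarith
qed

lemma compactin_c0_weak_imp_bounded:
  assumes "compactin c0_weak K"
  shows "\<exists>M. \<forall>t\<in>K. \<forall>n. \<bar>t n\<bar> \<le> M"
proof (rule c0_bounded_if_l1_bounded)
  show "K \<subseteq> c0" using compactin_subset_topspace[OF assms] by (simp add: topspace_c0_weak)
  fix a :: "nat \<Rightarrow> real" assume "summable (\<lambda>n. \<bar>a n\<bar>)"
  then have "compactin euclidean ((\<lambda>s. \<Sum>n. a n * s n) ` K)"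
    by (intro image_compactin[OF assms] continuous_map_c0_dual l1_functional_in_c0_dual)
  then have "bounded ((\<lambda>s. \<Sum>n. a n * s n) ` K)" by (simp add: compact_imp_bounded)
  then show "\<exists>B. \<forall>t\<in>K. \<bar>\<Sum>n. a n * t n\<bar> \<le> B" by (auto simp: bounded_iff)
qed

lemma continuous_map_suminf_real:
  fixes g :: "nat \<Rightarrow> 'a \<Rightarrow> real"
  assumes cont: "\<And>n. continuous_map X euclidean (g n)"
    and bound: "\<And>n x. x \<in> topspace X \<Longrightarrow> \<bar>g n x\<bar> \<le> b n" and b: "summable b"
  shows "continuous_map X euclidean (\<lambda>x. \<Sum>n. g n x)"
proof -
  have "continuous_map X Met_TC.mtopology (\<lambda>x. \<Sum>n. g n x)"
  proof (rule Met_TC.continuous_map_uniform_limit[where F=sequentially and f="\<lambda>N x. \<Sum>n<N. g n x"])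
    show "\<forall>\<^sub>F N in sequentially. continuous_map X Met_TC.mtopology (\<lambda>x. \<Sum>n<N. g n x)"
      using cont by (simp add: continuous_map_sum)
  next
    fix e :: real assume "0 < e"
    then obtain N0 where N0: "\<And>N. N0 \<le> N \<Longrightarrow> norm (\<Sum>n. b (n + N)) < e"
      using suminf_exist_split[OF _ b] by blast
    have "dist (\<Sum>n<N. g n x) (\<Sum>n. g n x) < e" if "N0 \<le> N" "x \<in> topspace X" for N x
    proof -
      have gb: "\<bar>g n x\<bar> \<le> b n" for n by (rule bound[OF that(2)])
      have sg: "summable (\<lambda>n. \<bar>g n x\<bar>)" by (rule summable_comparison_test[OF _ b]) (use gb in auto)
      have sg_shift: "summable (\<lambda>n. \<bar>g (n + N) x\<bar>)"
        using sg by (rule summable_iff_shift[THEN iffD2])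
      have "dist (\<Sum>n<N. g n x) (\<Sum>n. g n x) = \<bar>\<Sum>n. g (n + N) x\<bar>"
        using suminf_split_initial_segment[OF summable_rabs_cancel[OF sg], of N]
        by (simp add: dist_real_def)
      also have "\<dots> \<le> (\<Sum>n. \<bar>g (n + N) x\<bar>)" by (rule summable_rabs[OF sg_shift])
      also have "\<dots> \<le> (\<Sum>n. b (n + N))"
        by (rule suminf_le[OF gb sg_shift]) (use b in \<open>simp add: summable_iff_shift\<close>)
      also have "\<dots> < e" using N0[OF that(1)] by simp
      finally show ?thesis .
    qed
    then show "\<forall>\<^sub>F N in sequentially. \<forall>x\<in>topspace X. (\<Sum>n. g n x) \<in> UNIV \<and>
        dist (\<Sum>n<N. g n x) (\<Sum>n. g n x) < e"
      by (auto intro: eventually_sequentiallyI[of N0])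
  qed simp
  then show ?thesis by simp
qed

definition multiplier_cube :: "(nat \<Rightarrow> real) topology" where
  "multiplier_cube = product_topology (\<lambda>_. top_of_set {-1..1}) UNIV"

lemma topspace_multiplier_cube: "topspace multiplier_cube = PiE UNIV (\<lambda>_. {-1..1})"
  by (simp add: multiplier_cube_def)

lemma compact_space_multiplier_cube: "compact_space multiplier_cube"
  unfolding multiplier_cube_def compact_space_product_topology
  by (auto intro!: compact_space_subtopology)

lemma continuous_map_multiplier_cube_coordinate:
  "continuous_map multiplier_cube euclidean (\<lambda>l. l n)"
proof -
  have "continuous_map multiplier_cube (top_of_set {-1..1}) (\<lambda>l. l n)"
    unfolding multiplier_cube_def by (rule continuous_map_product_projection) simp
  then show ?thesis by (rule continuous_map_into_fulltopology)
qed

lemma mult_multiplier_in_c0: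
  assumes "t \<in> c0" "\<And>n. \<bar>l n\<bar> \<le> 1"
  shows "(\<lambda>n. l n * t n) \<in> c0"
  unfolding c0_def mem_Collect_eq
proof (rule Lim_null_comparison)
  show "\<forall>\<^sub>F n in sequentially. norm (l n * t n) \<le> \<bar>t n\<bar>"
    using assms(2) by (intro always_eventually allI) (simp add: abs_mult mult_left_le_one_le)
  show "(\<lambda>n. \<bar>t n\<bar>) \<longlonglongrightarrow> 0" using assms(1) unfolding c0_def by (simp add: tendsto_rabs_zero)
qed

lemma continuous_map_l1_series_mult_multiplier:
  fixes K :: "(nat \<Rightarrow> real) set"
  assumes a: "summable (\<lambda>n. \<bar>a n\<bar>)" and M: "\<And>t n. t \<in> K \<Longrightarrow> \<bar>t n\<bar> \<le> M"
  shows "continuous_map (prod_topology (subtopology c0_weak K) multiplier_cube) euclidean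
           (\<lambda>(t, l). \<Sum>n. a n * (l n * t n))"
    (is "continuous_map ?X _ _")
  unfolding case_prod_beta
proof (rule continuous_map_suminf_real)
  fix n
  have "continuous_map ?X euclidean (\<lambda>p. fst p n)"
    using continuous_map_compose[OF continuous_map_fst
        continuous_map_from_subtopology[OF continuous_map_c0_coordinate]]
    by (simp add: o_def)
  moreover have "continuous_map ?X euclidean (\<lambda>p. snd p n)"
    using continuous_map_compose[OF continuous_map_snd continuous_map_multiplier_cube_coordinate]
    by (simp add: o_def)
  ultimately show "continuous_map ?X euclidean (\<lambda>p. a n * (snd p n * fst p n))"
    by (intro continuous_map_real_mult_left continuous_map_real_mult)
next
  show "summable (\<lambda>n. \<bar>a n\<bar> * \<bar>M\<bar>)" using a by (rule summable_mult2)
  fix n p assume "p \<in> topspace ?X"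
  then have "\<bar>snd p n\<bar> \<le> 1" "\<bar>fst p n\<bar> \<le> \<bar>M\<bar>"
    using M[of "fst p" n] by (auto simp: topspace_multiplier_cube PiE_def Pi_def abs_le_iff)
  then have "\<bar>snd p n\<bar> * \<bar>fst p n\<bar> \<le> 1 * \<bar>M\<bar>" by (intro mult_mono) auto
  then show "\<bar>a n * (snd p n * fst p n)\<bar> \<le> \<bar>a n\<bar> * \<bar>M\<bar>"
    by (simp add: abs_mult mult_left_mono)
qed

lemma continuous_map_mult_multiplier:
  fixes K :: "(nat \<Rightarrow> real) set"
  assumes K: "K \<subseteq> c0" and M: "\<And>t n. t \<in> K \<Longrightarrow> \<bar>t n\<bar> \<le> M"
  shows "continuous_map (prod_topology (subtopology c0_weak K) multiplier_cube) c0_weak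
           (\<lambda>(t, l) n. l n * t n)"
    (is "continuous_map ?X _ _")
proof (rule continuous_map_into_c0_weak)
  have in_c0: "(\<lambda>n. l n * t n) \<in> c0" if "(t, l) \<in> topspace ?X" for t l
    using that K by (intro mult_multiplier_in_c0) (auto simp: topspace_multiplier_cube abs_le_iff)
  then show "(case p of (t, l) \<Rightarrow> \<lambda>n. l n * t n) \<in> c0" if "p \<in> topspace ?X" for p
    using that by (cases p) auto
  fix \<phi> assume \<phi>: "\<phi> \<in> c0_dual"
  have "continuous_map ?X euclidean (\<lambda>(t, l). \<Sum>n. \<phi> (unit_seq n) * (l n * t n))"
    using c0_dual_summable[OF \<phi>] M by (rule continuous_map_l1_series_mult_multiplier)
  then show "continuous_map ?X euclidean (\<lambda>p. \<phi> (case p of (t, l) \<Rightarrow> \<lambda>n. l n * t n))"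
  proof (rule continuous_map_eq)
    fix p assume "p \<in> topspace ?X"
    then show "(case p of (t, l) \<Rightarrow> \<Sum>n. \<phi> (unit_seq n) * (l n * t n))
        = \<phi> (case p of (t, l) \<Rightarrow> \<lambda>n. l n * t n)"
      using in_c0 by (cases p) (simp add: c0_dual_eq_suminf[OF \<phi>])
  qed
qed

lemma dominated_eq_mult_multiplier:
  assumes "\<And>n. \<bar>s n\<bar> \<le> \<bar>t n\<bar>"
  obtains l where "l \<in> topspace multiplier_cube" "s = (\<lambda>n. l n * t n)"
proof
  define l where "l n = (if t n = 0 then 0 else s n / t n)" for n
  have "\<bar>l n\<bar> \<le> 1" for n
    using assms[of n] by (auto simp: l_def abs_divide divide_le_eq_1)
  then show "l \<in> topspace multiplier_cube" by (auto simp: topspace_multiplier_cube abs_le_iff)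
  show "s = (\<lambda>n. l n * t n)"
  proof
    fix n show "s n = l n * t n" using assms[of n] by (auto simp: l_def)
  qed
qed

lemma rel_weakly_compact_c0_dominated:
  assumes S: "rel_weakly_compact_c0 S" and T: "T \<subseteq> c0"
    and dominated: "\<And>s. s \<in> T \<Longrightarrow> \<exists>t\<in>S. \<forall>n. \<bar>s n\<bar> \<le> \<bar>t n\<bar>"
  shows "rel_weakly_compact_c0 T"
proof -
  define K where "K = c0_weak closure_of S"
  have "S \<subseteq> c0" and K: "compactin c0_weak K"
    using S by (auto simp: rel_weakly_compact_c0_def K_def)
  then have "K \<subseteq> c0" "S \<subseteq> K"
    using compactin_subset_topspace[OF K] closure_of_subset[of S c0_weak]
    by (auto simp: topspace_c0_weak K_def)
  obtain M where M: "\<And>t n. t \<in> K \<Longrightarrow> \<bar>t n\<bar> \<le> M"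
    using compactin_c0_weak_imp_bounded[OF K] by blast
  define Q where "Q = (\<lambda>(t, l) n. l n * t n) ` (K \<times> topspace multiplier_cube)"
  have "compactin (prod_topology (subtopology c0_weak K) multiplier_cube)
      (K \<times> topspace multiplier_cube)"
    using K compact_space_multiplier_cube
    by (auto simp: compactin_Times compactin_subtopology compact_space_def)
  moreover have "continuous_map (prod_topology (subtopology c0_weak K) multiplier_cube) c0_weak
      (\<lambda>(t, l) n. l n * t n)"
    by (intro continuous_map_mult_multiplier[OF \<open>K \<subseteq> c0\<close>]) (rule M)
  ultimately have Q: "compactin c0_weak Q"
    unfolding Q_def by (rule image_compactin)
  have "T \<subseteq> Q"
  proof
    fix s assume "s \<in> T"
    then obtain t where t: "t \<in> S" "\<And>n. \<bar>s n\<bar> \<le> \<bar>t n\<bar>" using dominated by blast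
    obtain l where "l \<in> topspace multiplier_cube" "s = (\<lambda>n. l n * t n)"
      by (rule dominated_eq_mult_multiplier[OF t(2)])
    then show "s \<in> Q" using t(1) \<open>S \<subseteq> K\<close> unfolding Q_def by force
  qed
  then have "c0_weak closure_of T \<subseteq> Q"
    by (rule closure_of_minimal[OF _ compactin_imp_closedin[OF Hausdorff_space_c0_weak Q]])
  then show ?thesis using T closed_compactin[OF Q] by (simp add: rel_weakly_compact_c0_def)
qed

lemma rel_weakly_compact_c0_subset:
  "rel_weakly_compact_c0 T \<Longrightarrow> S \<subseteq> T \<Longrightarrow> rel_weakly_compact_c0 S"
  unfolding rel_weakly_compact_c0_def
  by (meson closed_compactin closedin_closure_of closure_of_mono order_trans)

section \<open>Almost Grothendieck sets\<close>

text \<open>Disjointness is preserved because dual_disjoint only involves moduli, and taking the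
  modulus is idempotent.\<close>

lemma dual_abs_disjoint_weak_star_null:
  fixes f :: "nat \<Rightarrow> 'a::banach_lattice \<Rightarrow> real"
  assumes d: "property_d TYPE('a)" and f: "weak_star_null f" "disjoint_dual_seq f"
  shows "weak_star_null (\<lambda>n. dual_abs (f n))" "disjoint_dual_seq (\<lambda>n. dual_abs (f n))"
proof -
  have f_n: "lattice_functional (f n)" for n
    using f(1) by (simp add: weak_star_null_def lattice_functional_def)
  show "weak_star_null (\<lambda>n. dual_abs (f n))"
    using d f lattice_functional.bounded_linear_dual_abs[OF f_n]
    unfolding property_d_def weak_star_null_def by blast
  show "disjoint_dual_seq (\<lambda>n. dual_abs (f n))"
    using f(2) unfolding disjoint_dual_seq_def dual_disjoint_def
    by (simp add: lattice_functional.dual_abs_dual_abs[OF f_n])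
qed

lemma almost_grothendieck_subset:
  "almost_grothendieck B \<Longrightarrow> A \<subseteq> B \<Longrightarrow> almost_grothendieck A"
  unfolding almost_grothendieck_def by (meson image_mono rel_weakly_compact_c0_subset)

lemma labs_image_subset_sol: "labs ` A \<subseteq> sol A"
  unfolding sol_def by (auto simp: labs_of_nonneg labs_nonneg)

lemma almost_grothendieck_sol_if_labs:
  fixes A :: "'a::banach_lattice set"
  assumes d: "property_d TYPE('a)" and A: "almost_grothendieck (labs ` A)"
  shows "almost_grothendieck (sol A)"
  unfolding almost_grothendieck_def
proof (intro allI impI)
  fix f :: "nat \<Rightarrow> 'a \<Rightarrow> real" assume f: "weak_star_null f \<and> disjoint_dual_seq f"
  have f_n: "lattice_functional (f n)" for n
    using f by (simp add: weak_star_null_def lattice_functional_def)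
  note abs_f = dual_abs_disjoint_weak_star_null[OF d conjunct1[OF f] conjunct2[OF f]]
  show "rel_weakly_compact_c0 ((\<lambda>x n. f n x) ` sol A)"
  proof (rule rel_weakly_compact_c0_dominated)
    show "rel_weakly_compact_c0 ((\<lambda>x n. dual_abs (f n) x) ` labs ` A)"
      using A abs_f unfolding almost_grothendieck_def by blast
    show "(\<lambda>x n. f n x) ` sol A \<subseteq> c0"
      using f by (auto simp: weak_star_null_def c0_def)
    fix s assume "s \<in> (\<lambda>x n. f n x) ` sol A"
    then obtain x y where s: "s = (\<lambda>n. f n x)" and y: "y \<in> A" "labs x \<le> labs y"
      unfolding sol_def by blast
    have "\<bar>s n\<bar> \<le> \<bar>dual_abs (f n) (labs y)\<bar>" for n
      using lattice_functional.abs_le_dual_abs_labs[OF f_n y(2), of n]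
      by (simp add: s order_trans[OF _ abs_ge_self])
    then show "\<exists>t\<in>(\<lambda>x n. dual_abs (f n) x) ` labs ` A. \<forall>n. \<bar>s n\<bar> \<le> \<bar>t n\<bar>"
      using y(1) by (intro bexI[of _ "\<lambda>n. dual_abs (f n) (labs y)"]) auto
  qed
qed

theorem mainTheorem2:
  fixes A :: "'a::banach_lattice set"
  assumes "property_d TYPE('a)"
  shows "almost_grothendieck (labs ` A) \<longleftrightarrow> almost_grothendieck (sol A)"
  using almost_grothendieck_sol_if_labs[OF assms] almost_grothendieck_subset labs_image_subset_sol
  by blast

end
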